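(* Let $m\in\{1,2\}$ and let $\gamma_1,\dots,\gamma_m\colon[0,T]\to\overline{\mathbb D}\setminus\{0\}$ be Jordan arcs with $\gamma_k(0)\in\partial\mathbb D$ and $\Gamma_k:=\gamma_k(0,T]\subset\mathbb D$, pairwise disjoint. Then $\alpha_k(t)\le1$ for all $t\in[0,T]$ and all $k$.
   Context: $\mathbb D$ is the unit disk. $g_t$ is the unique conformal map of $\mathbb D\setminus\bigcup_{k=1}^m\gamma_k[0,t]$ onto $\mathbb D$ with $g_t(0)=0$, $g_t'(0)>0$; $h_{k;t}$ is the unique conformal map of $\mathbb D\setminus\gamma_k[0,t]$ onto $\mathbb D$ with $h_{k;t}(0)=0$, $h_{k;t}'(0)>0$; $\zeta_k(t):=h_{k;t}(\gamma_k(t))\in\partial\mathbb D$ (boundary value). $\alpha_k(t):=\big|(g_t\circ h_{k;t}^{-1})'(\zeta_k(t))\big|$, where $g_t\circ h_{k;t}^{-1}$ is extended analytically by Schwarz reflection to a neighborhood of $\zeta_k(t)$. *)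

theory Defs
  imports "HOL-Complex_Analysis.Complex_Analysis"
begin

abbreviation unit_disk :: "complex set" where
  "unit_disk \<equiv> ball 0 1"

definition jordan_arc_on :: "real \<Rightarrow> (real \<Rightarrow> complex) \<Rightarrow> bool" where
  "jordan_arc_on T c \<longleftrightarrow> continuous_on {0..T} c \<and> inj_on c {0..T}"

definition normalized_conformal_map :: "complex set \<Rightarrow> (complex \<Rightarrow> complex) \<Rightarrow> bool" where
  "normalized_conformal_map S f \<longleftrightarrow>
     f holomorphic_on S \<and> inj_on f S \<and> f ` S = unit_disk \<and>
     f 0 = 0 \<and> deriv f 0 \<in> \<real> \<and> Re (deriv f 0) > 0"

end

theory Submission
  imports Defs
begin

text \<open>Write \<open>\<Omega>\<close> for the disk minus all arcs and \<open>\<Omega>\<^sub>k\<close> for the disk minus the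
  \<open>k\<close>-th arc. Since \<open>h\<close> maps \<open>\<Omega> \<subseteq> \<Omega>\<^sub>k\<close> into the disk fixing 0, Schwarz's lemma
  applied to \<open>h \<circ> g\<^sup>-\<^sup>1\<close> gives \<open>|h| \<le> |g|\<close> on \<open>\<Omega>\<close>, i.e. \<open>|w| \<le> |F w| < 1\<close> on
  \<open>h(\<Omega>)\<close>. Arcs are nowhere dense, so \<open>h(\<Omega>)\<close> is dense in the disk and the bounds
  \<open>|z| \<le> |F z| \<le> 1\<close> hold on the closed disk near \<open>\<zeta>\<close>, where \<open>|\<zeta>| = 1\<close> because \<open>\<zeta>\<close> is a
  boundary value of the homeomorphism \<open>h\<close>. Differentiating \<open>|F|\<^sup>2\<close> along the radius and
  along the circle at \<open>\<zeta>\<close> then shows that \<open>conj (F \<zeta>) \<zeta> F'(\<zeta>)\<close> is a real number in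
  \<open>[0,1]\<close>.\<close>

lemma DERIV_nonpos_at_right_local_max:
  fixes f :: "real \<Rightarrow> real"
  assumes "(f has_real_derivative D) (at x)" and "\<delta> > 0"
    and "\<And>h. 0 < h \<Longrightarrow> h < \<delta> \<Longrightarrow> f (x + h) \<le> f x"
  shows "D \<le> 0"
proof (rule ccontr)
  assume "\<not> D \<le> 0"
  then obtain d where "d > 0" and inc: "\<And>h. 0 < h \<Longrightarrow> h < d \<Longrightarrow> f x < f (x + h)"
    using DERIV_pos_inc_right[OF assms(1)] by auto
  have "f x < f (x + min d \<delta> / 2)" using inc \<open>d > 0\<close> \<open>\<delta> > 0\<close> by simp
  moreover have "f (x + min d \<delta> / 2) \<le> f x" using assms(3) \<open>d > 0\<close> \<open>\<delta> > 0\<close> by simp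
  ultimately show False by simp
qed

lemma has_real_derivative_norm_power2:
  fixes G :: "real \<Rightarrow> complex"
  assumes "(G has_vector_derivative D) (at s)"
  shows "((\<lambda>s. (cmod (G s))\<^sup>2) has_real_derivative 2 * Re (cnj (G s) * D)) (at s)"
proof -
  have "((\<lambda>s. G s \<bullet> G s) has_derivative (\<lambda>h. G s \<bullet> (h *\<^sub>R D) + (h *\<^sub>R D) \<bullet> G s)) (at s)"
    using assms unfolding has_vector_derivative_def by (intro derivative_intros)
  moreover have "(\<lambda>h. G s \<bullet> (h *\<^sub>R D) + (h *\<^sub>R D) \<bullet> G s) = (*) (2 * Re (cnj (G s) * D))"
    by (auto simp: inner_complex_def algebra_simps)
  ultimately show ?thesis
    unfolding has_field_derivative_def power2_norm_eq_inner by simp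
qed

lemma has_real_derivative_norm_power2_along_curve:
  assumes "(q has_field_derivative d) (at 0)" and "q 0 = z"
    and "(F has_field_derivative c) (at z)"
  shows "((\<lambda>s. (cmod (F (q (of_real s))))\<^sup>2) has_real_derivative 2 * Re (cnj (F z) * (d * c)))
           (at 0)"
proof -
  have "((F \<circ> q) has_field_derivative c * d) (at (of_real 0))"
    using DERIV_chain[of F c q 0 d] assms by simp
  from has_real_derivative_norm_power2[OF has_vector_derivative_real_field[OF this]]
  show ?thesis using \<open>q 0 = z\<close> by (simp add: mult.commute)
qed

lemma isCont_imp_real_segment_in_open:
  fixes q :: "complex \<Rightarrow> 'a::topological_space"
  assumes "isCont q 0" and "open U" and "q 0 \<in> U"
  obtains \<delta> where "\<delta> > 0" and "\<And>s. \<bar>s\<bar> < \<delta> \<Longrightarrow> q (of_real s) \<in> U"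
proof -
  have "\<forall>\<^sub>F z in at 0. q z \<in> U"
    using assms by (simp add: isCont_def tendsto_def)
  then obtain \<delta> where "\<delta> > 0" and \<delta>: "\<And>z. z \<noteq> 0 \<Longrightarrow> dist z 0 < \<delta> \<Longrightarrow> q z \<in> U"
    by (auto simp: eventually_at)
  have "q (of_real s) \<in> U" if "\<bar>s\<bar> < \<delta>" for s
    using \<delta>[of "of_real s"] that \<open>q 0 \<in> U\<close> by (cases "s = 0") auto
  with \<open>\<delta> > 0\<close> show thesis by (rule that)
qed

context
  fixes F :: "complex \<Rightarrow> complex" and U :: "complex set" and \<zeta> :: complex
  assumes holF: "F holomorphic_on U" and "open U" and "\<zeta> \<in> U" and \<zeta>_sphere: "norm \<zeta> = 1"
    and bounds: "\<And>z. z \<in> U \<Longrightarrow> norm z \<le> 1 \<Longrightarrow> norm z \<le> norm (F z) \<and> norm (F z) \<le> 1"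
begin

private lemma has_field_derivative_at_sphere: "(F has_field_derivative deriv F \<zeta>) (at \<zeta>)"
  using holF \<open>open U\<close> \<open>\<zeta> \<in> U\<close> by (rule holomorphic_derivI)

private lemma norm_at_sphere: "norm (F \<zeta>) = 1"
  using bounds[OF \<open>\<zeta> \<in> U\<close>] \<zeta>_sphere by linarith

private lemma radial_derivative_bounds:
  "0 \<le> Re (cnj (F \<zeta>) * \<zeta> * deriv F \<zeta>) \<and> Re (cnj (F \<zeta>) * \<zeta> * deriv F \<zeta>) \<le> 1"
proof -
  define l where "l = cnj (F \<zeta>) * \<zeta> * deriv F \<zeta>"
  define \<phi> where "\<phi> = (\<lambda>s. (cmod (F (\<zeta> * (1 - of_real s))))\<^sup>2)"
  have radial: "((\<lambda>z. \<zeta> * (1 - z)) has_field_derivative - \<zeta>) (at 0)"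
    by (auto intro!: derivative_eq_intros)
  have "2 * Re (cnj (F \<zeta>) * (- \<zeta> * deriv F \<zeta>)) = - 2 * Re l"
    by (simp add: l_def algebra_simps)
  then have d\<phi>: "(\<phi> has_real_derivative - 2 * Re l) (at 0)"
    using has_real_derivative_norm_power2_along_curve[OF radial _ has_field_derivative_at_sphere]
    unfolding \<phi>_def by simp
  obtain \<delta> where "\<delta> > 0" and \<delta>: "\<And>s. \<bar>s\<bar> < \<delta> \<Longrightarrow> \<zeta> * (1 - of_real s) \<in> U"
    using isCont_imp_real_segment_in_open[OF DERIV_isCont[OF radial] \<open>open U\<close>] \<open>\<zeta> \<in> U\<close> by auto
  have \<phi>_bounds: "(1 - s)\<^sup>2 \<le> \<phi> s \<and> \<phi> s \<le> 1" if "0 < s" "s < min \<delta> 1" for s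
  proof -
    have "norm (\<zeta> * (1 - of_real s)) = norm \<zeta> * \<bar>1 - s\<bar>"
      by (metis norm_mult norm_of_real of_real_1 of_real_diff)
    then have "norm (\<zeta> * (1 - of_real s)) = 1 - s"
      using that \<zeta>_sphere by simp
    then show ?thesis
      using bounds[OF \<delta>, of s] that unfolding \<phi>_def
      by (auto intro!: power_mono simp: power_le_one)
  qed
  have "\<phi> 0 = 1" using norm_at_sphere by (simp add: \<phi>_def)
  have "- 2 * Re l \<le> 0"
    by (rule DERIV_nonpos_at_right_local_max[OF d\<phi>, where \<delta> = "min \<delta> 1"])
      (use \<phi>_bounds \<open>\<phi> 0 = 1\<close> \<open>\<delta> > 0\<close> in auto)
  moreover have "2 * Re l - 2 \<le> 0"
  proof (rule DERIV_nonpos_at_right_local_max[where f = "\<lambda>s. (1 - s)\<^sup>2 - \<phi> s" and \<delta> = "min \<delta> 1"])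
    show "((\<lambda>s. (1 - s)\<^sup>2 - \<phi> s) has_real_derivative 2 * Re l - 2) (at 0)"
      using d\<phi> by (auto intro!: derivative_eq_intros)
  qed (use \<phi>_bounds \<open>\<phi> 0 = 1\<close> \<open>\<delta> > 0\<close> in auto)
  ultimately show ?thesis by (simp add: l_def)
qed

private lemma tangential_derivative_real: "Im (cnj (F \<zeta>) * \<zeta> * deriv F \<zeta>) = 0"
proof -
  define l where "l = cnj (F \<zeta>) * \<zeta> * deriv F \<zeta>"
  define \<psi> where "\<psi> = (\<lambda>s. (cmod (F (\<zeta> * exp (\<i> * of_real s))))\<^sup>2)"
  have tangential: "((\<lambda>z. \<zeta> * exp (\<i> * z)) has_field_derivative \<i> * \<zeta>) (at 0)"
    by (auto intro!: derivative_eq_intros)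
  have "2 * Re (cnj (F \<zeta>) * (\<i> * \<zeta> * deriv F \<zeta>)) = - 2 * Im l"
    by (simp add: l_def algebra_simps)
  then have "(\<psi> has_real_derivative - 2 * Im l) (at 0)"
    using has_real_derivative_norm_power2_along_curve[OF tangential _ has_field_derivative_at_sphere]
    unfolding \<psi>_def by simp
  moreover obtain \<epsilon> where "\<epsilon> > 0" and \<epsilon>: "\<And>s. \<bar>s\<bar> < \<epsilon> \<Longrightarrow> \<zeta> * exp (\<i> * of_real s) \<in> U"
    using isCont_imp_real_segment_in_open[OF DERIV_isCont[OF tangential] \<open>open U\<close>] \<open>\<zeta> \<in> U\<close> by auto
  moreover have "\<psi> s = 1" if "\<bar>s\<bar> < \<epsilon>" for s
  proof -
    have "norm (\<zeta> * exp (\<i> * of_real s)) = 1"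
      using \<zeta>_sphere by (simp add: norm_mult)
    then have "norm (F (\<zeta> * exp (\<i> * of_real s))) = 1"
      using bounds[OF \<epsilon>[OF that]] by simp
    then show ?thesis by (simp add: \<psi>_def)
  qed
  ultimately have "Im l = 0"
    using DERIV_local_const[of \<psi> "- 2 * Im l" 0 \<epsilon>] by simp
  then show ?thesis by (simp only: l_def)
qed

lemma norm_deriv_le_one_at_sphere: "norm (deriv F \<zeta>) \<le> 1"
proof -
  define l where "l = cnj (F \<zeta>) * \<zeta> * deriv F \<zeta>"
  have "norm (deriv F \<zeta>) = norm l"
    using norm_at_sphere \<zeta>_sphere by (simp add: l_def norm_mult)
  also have "\<dots> \<le> 1"
    using radial_derivative_bounds tangential_derivative_real by (simp add: l_def cmod_def)
  finally show ?thesis .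
qed

end

lemma interior_injective_image_real_empty:
  fixes c :: "real \<Rightarrow> 'a::euclidean_space"
  assumes "DIM('a) \<ge> 2" and "compact S" and "continuous_on S c" and "inj_on c S"
  shows "interior (c ` S) = {}"
proof (rule ccontr)
  assume "interior (c ` S) \<noteq> {}"
  then obtain x e where "e > 0" and ball: "ball x e \<subseteq> c ` S"
    by (metis ex_in_conv mem_interior)
  obtain c' where "homeomorphism S (c ` S) c c'"
    using homeomorphism_compact[OF assms(2,3) refl assms(4)] by blast
  then have cont: "continuous_on (c ` S) c'" and c'_inv: "\<And>y. y \<in> c ` S \<Longrightarrow> c (c' y) = y"
    unfolding homeomorphism_def by auto
  have "continuous_on (ball x e) c'"
    using cont ball by (rule continuous_on_subset)
  moreover have "inj_on c' (ball x e)"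
    by (rule inj_on_inverseI[where g = c]) (use c'_inv ball in blast)
  ultimately have "DIM('a) \<le> DIM(real)"
    using invariance_of_dimension[of "ball x e" c'] \<open>e > 0\<close> by auto
  with assms(1) show False by simp
qed

lemma interior_Union_closed_empty:
  fixes \<A> :: "'a::topological_space set set"
  assumes "finite \<A>" and "\<And>S. S \<in> \<A> \<Longrightarrow> closed S" and "\<And>S. S \<in> \<A> \<Longrightarrow> interior S = {}"
  shows "interior (\<Union>\<A>) = {}"
  using assms by (induction rule: finite_induct) (simp_all add: interior_closed_Un_empty_interior)

lemma image_subset_closure_image_Diff:
  assumes "open S" and "continuous_on S h" and "interior A = {}"
  shows "h ` S \<subseteq> closure (h ` (S - A))"
proof (intro image_subsetI)
  fix w assume "w \<in> S"
  show "h w \<in> closure (h ` (S - A))"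
    unfolding closure_iff_nhds_not_empty
  proof (intro allI impI)
    fix V W assume "W \<subseteq> V" "open W" "h w \<in> W"
    have "open (S \<inter> h -` W)"
      using assms(2,1) \<open>open W\<close> by (rule continuous_open_preimage)
    moreover have "w \<in> S \<inter> h -` W" using \<open>w \<in> S\<close> \<open>h w \<in> W\<close> by simp
    ultimately have "\<not> S \<inter> h -` W \<subseteq> A"
      using interior_maximal assms(3) by blast
    then show "h ` (S - A) \<inter> V \<noteq> {}" using \<open>W \<subseteq> V\<close> by blast
  qed
qed

lemma continuous_ge_on_closure_Int:
  fixes f :: "'a::topological_space \<Rightarrow> real"
  assumes "continuous_on U f" and "G \<subseteq> U" and "\<And>x. x \<in> G \<Longrightarrow> a \<le> f x"
    and "x \<in> U" and "x \<in> closure G"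
  shows "a \<le> f x"
proof -
  have "closedin (top_of_set U) (U \<inter> f -` {a..})"
    using assms(1) closed_atLeast by (rule continuous_closedin_preimage)
  then obtain K where "closed K" and K: "U \<inter> f -` {a..} = U \<inter> K"
    by (auto simp: closedin_closed)
  then have "closure G \<subseteq> K"
    using assms(2,3) by (intro closure_minimal) auto
  then show ?thesis using K \<open>x \<in> U\<close> \<open>x \<in> closure G\<close> by blast
qed

lemma normalized_conformal_map_inverse:
  assumes "normalized_conformal_map S g" and "open S"
  obtains g' where "g' holomorphic_on unit_disk" and "\<And>z. z \<in> S \<Longrightarrow> g' (g z) = z"
    and "\<And>u. u \<in> unit_disk \<Longrightarrow> g' u \<in> S \<and> g (g' u) = u"
proof -
  have g: "g holomorphic_on S" "inj_on g S" "g ` S = unit_disk"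
    using assms(1) unfolding normalized_conformal_map_def by auto
  obtain g' where "g' holomorphic_on unit_disk" and g'g: "\<And>z. z \<in> S \<Longrightarrow> g' (g z) = z"
    using holomorphic_has_inverse[OF g(1) assms(2) g(2)] g(3) by metis
  moreover have "g' u \<in> S \<and> g (g' u) = u" if "u \<in> unit_disk" for u
    using that g(3) g'g by force
  ultimately show thesis by (rule that)
qed

lemma norm_le_normalized_conformal_map:
  assumes "normalized_conformal_map S g" and "open S" and "0 \<in> S"
    and "f holomorphic_on S" and "f ` S \<subseteq> unit_disk" and "f 0 = 0" and "w \<in> S"
  shows "norm (f w) \<le> norm (g w)"
proof -
  obtain g' where hol: "g' holomorphic_on unit_disk" and g'g: "\<And>z. z \<in> S \<Longrightarrow> g' (g z) = z"
    and g'_into: "\<And>u. u \<in> unit_disk \<Longrightarrow> g' u \<in> S \<and> g (g' u) = u"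
    using normalized_conformal_map_inverse[OF assms(1,2)] by metis
  have "g 0 = 0" and g_into: "g w \<in> unit_disk"
    using assms(1,7) unfolding normalized_conformal_map_def by auto
  have "(f \<circ> g') holomorphic_on unit_disk"
    using hol assms(4) g'_into by (intro holomorphic_on_compose_gen) auto
  moreover have "(f \<circ> g') 0 = 0" using g'g[OF \<open>0 \<in> S\<close>] \<open>g 0 = 0\<close> \<open>f 0 = 0\<close> by simp
  moreover have "norm ((f \<circ> g') z) < 1" if "norm z < 1" for z
    using g'_into[of z] assms(5) that by auto
  ultimately have "norm ((f \<circ> g') (g w)) \<le> norm (g w)"
    using Schwarz_Lemma(1)[of "f \<circ> g'" "g w"] g_into by simp
  then show ?thesis using g'g[OF \<open>w \<in> S\<close>] by simp
qed

lemma norm_boundary_limit_normalized_conformal_map: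
  assumes "normalized_conformal_map S h" and "open S"
    and "p islimpt S" and "p \<notin> S" and lim: "(h \<longlongrightarrow> \<zeta>) (at p within S)"
  shows "norm \<zeta> = 1"
proof -
  obtain h' where hol: "h' holomorphic_on unit_disk" and h'h: "\<And>z. z \<in> S \<Longrightarrow> h' (h z) = z"
    and h'_into: "\<And>u. u \<in> unit_disk \<Longrightarrow> h' u \<in> S \<and> h (h' u) = u"
    using normalized_conformal_map_inverse[OF assms(1,2)] by metis
  have h_into: "h z \<in> unit_disk" if "z \<in> S" for z
    using assms(1) that unfolding normalized_conformal_map_def by auto
  have nontriv: "at p within S \<noteq> bot"
    using \<open>p islimpt S\<close> by (simp add: trivial_limit_within)
  have in_S: "\<forall>\<^sub>F z in at p within S. z \<in> S"
    by (simp add: eventually_at_filter)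
  then have "\<forall>\<^sub>F z in at p within S. norm (h z) \<le> 1"
    by (rule eventually_mono) (use h_into in \<open>auto intro: less_imp_le\<close>)
  then have "norm \<zeta> \<le> 1"
    using tendsto_upperbound[OF tendsto_norm[OF lim] _ nontriv] by blast
  moreover have "\<not> norm \<zeta> < 1"
  proof
    assume "norm \<zeta> < 1"
    then have "\<zeta> \<in> interior unit_disk" by simp
    then have "isCont h' \<zeta>"
      by (rule continuous_on_interior[OF holomorphic_on_imp_continuous_on[OF hol]])
    then have "((\<lambda>z. h' (h z)) \<longlongrightarrow> h' \<zeta>) (at p within S)"
      using lim by (rule isCont_tendsto_compose)
    moreover have "\<forall>\<^sub>F z in at p within S. h' (h z) = z"
      using in_S by (rule eventually_mono) (rule h'h)
    ultimately have "((\<lambda>z. z) \<longlongrightarrow> h' \<zeta>) (at p within S)"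
      by (rule Lim_transform_eventually)
    then have "h' \<zeta> = p"
      using tendsto_unique[OF nontriv _ tendsto_ident_at] by simp
    then show False using h'_into[of \<zeta>] \<open>norm \<zeta> < 1\<close> \<open>p \<notin> S\<close> by auto
  qed
  ultimately show ?thesis by simp
qed

lemma islimpt_unit_disk_Diff:
  assumes "interior B = {}" and "p \<in> B" and "norm p \<le> 1"
  shows "p islimpt (unit_disk - B)"
proof -
  have "unit_disk \<subseteq> closure (unit_disk - B)"
    using image_subset_closure_image_Diff[OF open_ball continuous_on_id assms(1)] by simp
  then have "p \<in> closure (unit_disk - B)"
    using closure_mono[of unit_disk "closure (unit_disk - B)"] \<open>norm p \<le> 1\<close> by auto
  then show ?thesis
    using \<open>p \<in> B\<close> by (auto simp: closure_def)
qed

context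
  fixes A B :: "complex set" and g h F :: "complex \<Rightarrow> complex" and U :: "complex set"
  assumes "closed A" and "interior A = {}" and "0 \<notin> A" and "B \<subseteq> A" and "closed B"
    and g: "normalized_conformal_map (unit_disk - A) g"
    and h: "normalized_conformal_map (unit_disk - B) h"
    and "open U" and holF: "F holomorphic_on U"
    and F: "\<forall>w \<in> U \<inter> h ` (unit_disk - A). F w = g (inv_into (unit_disk - B) h w)"
begin

private lemma h_map:
  "h holomorphic_on unit_disk - B" "inj_on h (unit_disk - B)" "h ` (unit_disk - B) = unit_disk"
  "h 0 = 0"
  using h unfolding normalized_conformal_map_def by auto

private lemma transition_map_bounds_on_image:
  assumes "y \<in> U \<inter> h ` (unit_disk - A)"
  shows "norm y \<le> norm (F y) \<and> norm (F y) < 1"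
proof -
  obtain w where w: "w \<in> unit_disk - A" and y: "y = h w" using assms by blast
  have "open (unit_disk - A)" and "0 \<in> unit_disk - A"
    using \<open>closed A\<close> \<open>0 \<notin> A\<close> by auto
  moreover have "h holomorphic_on unit_disk - A" and "h ` (unit_disk - A) \<subseteq> unit_disk"
    using holomorphic_on_subset[OF h_map(1)] h_map(3) \<open>B \<subseteq> A\<close> by auto
  ultimately have "norm (h w) \<le> norm (g w)"
    using norm_le_normalized_conformal_map[OF g, where f = h] h_map(4) w by blast
  moreover have "inv_into (unit_disk - B) h y = w"
    using inv_into_f_f[OF h_map(2)] w \<open>B \<subseteq> A\<close> y by blast
  then have "F y = g w"
    using F assms by simp
  moreover have "norm (g w) < 1"
    using g w unfolding normalized_conformal_map_def by auto
  ultimately show ?thesis using y by simp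
qed

lemma transition_map_bounds_on_closed_disk:
  assumes "z \<in> U" and "norm z \<le> 1"
  shows "norm z \<le> norm (F z) \<and> norm (F z) \<le> 1"
proof -
  have "continuous_on (unit_disk - B) h"
    using h_map(1) by (rule holomorphic_on_imp_continuous_on)
  moreover have "unit_disk - B - A = unit_disk - A"
    using \<open>B \<subseteq> A\<close> by blast
  ultimately have "unit_disk \<subseteq> closure (h ` (unit_disk - A))"
    using image_subset_closure_image_Diff[of "unit_disk - B" h A] h_map(3) \<open>closed B\<close>
      \<open>interior A = {}\<close> by (simp add: open_Diff)
  then have z: "z \<in> closure (U \<inter> h ` (unit_disk - A))"
    using open_Int_closure_subset[OF \<open>open U\<close>] closure_mono[of unit_disk "closure (h ` _)"] assms
    by fastforce
  have "continuous_on U F"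
    using holF by (rule holomorphic_on_imp_continuous_on)
  then have cont: "continuous_on U (\<lambda>z. norm (F z) - norm z)" "continuous_on U (\<lambda>z. 1 - norm (F z))"
    by (intro continuous_intros; assumption)+
  have "0 \<le> norm (F z) - norm z" "0 \<le> 1 - norm (F z)"
    using continuous_ge_on_closure_Int[where a = 0, OF cont(1) Int_lower1 _ \<open>z \<in> U\<close> z]
      continuous_ge_on_closure_Int[where a = 0, OF cont(2) Int_lower1 _ \<open>z \<in> U\<close> z]
      transition_map_bounds_on_image by force+
  then show ?thesis by simp
qed

lemma norm_deriv_transition_map_le_one:
  assumes "p \<in> B" and "norm p \<le> 1" and lim: "(h \<longlongrightarrow> \<zeta>) (at p within unit_disk - B)"
    and "\<zeta> \<in> U"
  shows "norm (deriv F \<zeta>) \<le> 1"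
proof -
  have "interior B = {}"
    using interior_mono[OF \<open>B \<subseteq> A\<close>] \<open>interior A = {}\<close> by blast
  then have "p islimpt (unit_disk - B)"
    using islimpt_unit_disk_Diff assms(1,2) by blast
  then have "norm \<zeta> = 1"
    using norm_boundary_limit_normalized_conformal_map[OF h _ _ _ lim] \<open>closed B\<close> \<open>p \<in> B\<close>
    by (simp add: open_Diff)
  then show ?thesis
    using norm_deriv_le_one_at_sphere[OF holF \<open>open U\<close> \<open>\<zeta> \<in> U\<close>] transition_map_bounds_on_closed_disk
    by blast
qed

end

theorem lemma17:
  fixes m :: nat and T :: real and \<gamma> :: "nat \<Rightarrow> real \<Rightarrow> complex"
  assumes "m \<in> {1, 2}" and "0 < T"
    and "\<forall>k\<in>{1..m}. jordan_arc_on T (\<gamma> k)"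
    and "\<forall>k\<in>{1..m}. \<gamma> k ` {0..T} \<subseteq> cball 0 1 - {0}"
    and "\<forall>k\<in>{1..m}. \<gamma> k 0 \<in> sphere 0 1"
    and "\<forall>k\<in>{1..m}. \<gamma> k ` {0<..T} \<subseteq> unit_disk"
    and "\<forall>j\<in>{1..m}. \<forall>k\<in>{1..m}. j \<noteq> k \<longrightarrow> \<gamma> j ` {0<..T} \<inter> \<gamma> k ` {0<..T} = {}"
  shows "\<forall>t\<in>{0..T}. \<forall>k\<in>{1..m}. \<forall>g h \<zeta> U F.
     normalized_conformal_map (unit_disk - (\<Union>j\<in>{1..m}. \<gamma> j ` {0..t})) g \<and>
     normalized_conformal_map (unit_disk - \<gamma> k ` {0..t}) h \<and>
     (h \<longlongrightarrow> \<zeta>) (at (\<gamma> k t) within (unit_disk - \<gamma> k ` {0..t})) \<and>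
     open U \<and> \<zeta> \<in> U \<and> F holomorphic_on U \<and>
     (\<forall>w \<in> U \<inter> h ` (unit_disk - (\<Union>j\<in>{1..m}. \<gamma> j ` {0..t})).
         F w = g (inv_into (unit_disk - \<gamma> k ` {0..t}) h w))
     \<longrightarrow> cmod (deriv F \<zeta>) \<le> 1"
proof (intro ballI allI impI, elim conjE)
  fix t k g h \<zeta> U F
  let ?A = "\<Union>j\<in>{1..m}. \<gamma> j ` {0..t}" and ?B = "\<gamma> k ` {0..t}"
  assume "t \<in> {0..T}" and "k \<in> {1..m}"
    and maps: "normalized_conformal_map (unit_disk - ?A) g" "normalized_conformal_map (unit_disk - ?B) h"
    and lim: "(h \<longlongrightarrow> \<zeta>) (at (\<gamma> k t) within unit_disk - ?B)"
    and "open U" and "\<zeta> \<in> U" and "F holomorphic_on U"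
    and F: "\<forall>w \<in> U \<inter> h ` (unit_disk - ?A). F w = g (inv_into (unit_disk - ?B) h w)"
  have arc: "closed (\<gamma> j ` {0..t}) \<and> interior (\<gamma> j ` {0..t}) = {}" if "j \<in> {1..m}" for j
  proof -
    have "{0..t} \<subseteq> {0..T}" using \<open>t \<in> {0..T}\<close> by simp
    then have "continuous_on {0..t} (\<gamma> j)" and "inj_on (\<gamma> j) {0..t}"
      using assms(3) that continuous_on_subset inj_on_subset unfolding jordan_arc_on_def by blast+
    then show ?thesis
      using interior_injective_image_real_empty[of "{0..t}" "\<gamma> j"]
      by (simp add: compact_continuous_image compact_imp_closed)
  qed
  have "closed ?A"
    using arc by (intro closed_UN) auto
  moreover have "interior ?A = {}"
    using arc by (intro interior_Union_closed_empty) auto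
  moreover have "?A \<subseteq> cball 0 1 - {0}"
    using assms(4) image_mono[of "{0..t}" "{0..T}"] \<open>t \<in> {0..T}\<close> by fastforce
  then have "0 \<notin> ?A" by blast
  moreover have "?B \<subseteq> ?A"
    using \<open>k \<in> {1..m}\<close> by blast
  moreover have "closed ?B"
    using arc[OF \<open>k \<in> {1..m}\<close>] by simp
  moreover have "\<gamma> k t \<in> ?B"
    using \<open>t \<in> {0..T}\<close> by simp
  moreover have "norm (\<gamma> k t) \<le> 1"
    using \<open>?A \<subseteq> cball 0 1 - {0}\<close> \<open>?B \<subseteq> ?A\<close> \<open>\<gamma> k t \<in> ?B\<close> by (meson DiffD1 mem_cball_0 subsetD)
  ultimately show "cmod (deriv F \<zeta>) \<le> 1"
    by (rule norm_deriv_transition_map_le_one[OF _ _ _ _ _ maps \<open>open U\<close> \<open>F holomorphic_on U\<close> F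
          _ _ lim \<open>\<zeta> \<in> U\<close>])
qed

end
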